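(* Let $q>4$ and let $\mathcal{C}\le\mathbb{F}_q^{2n}$ be a formally self-dual divisible linear code of length $2n$. Then $\mathcal{C}$ is monomially equivalent to the direct sum of $n$ copies of $\langle(1,1)\rangle_{\mathbb{F}_q}$.
   Context: For a linear code $\mathcal{C}\le\mathbb{F}_q^N$, $W_\mathcal{C}(x,y)=\sum_{c\in\mathcal{C}}x^{N-\mathrm{wt}(c)}y^{\mathrm{wt}(c)}$, where $\mathrm{wt}(c)$ is the number of nonzero coordinates. $\mathcal{C}$ is formally self-dual if $W_\mathcal{C}(x,y)=W_\mathcal{C}\big(\tfrac{x+(q-1)y}{\sqrt q},\tfrac{x-y}{\sqrt q}\big)$. $\mathcal{C}$ is divisible if there is an integer $\Delta>1$ dividing the weight of every codeword. Two codes are monomially equivalent if one is the image of the other under $v\mapsto DPv$ with $D$ invertible diagonal and $P$ a permutation matrix; the direct sum of $n$ copies of $\langle(1,1)\rangle_{\mathbb{F}_q}$ is the code in $\mathbb{F}_q^{2n}$ with block-diagonal generator matrix of $n$ blocks $(1\ 1)$. *)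

theory Defs
  imports Complex_Main "HOL-Combinatorics.Permutations"
begin

text \<open>Vectors of length N over a field are modelled as functions nat => 'a
  that vanish outside the index set {0..<N}.\<close>

definition vecs :: "nat \<Rightarrow> (nat \<Rightarrow> 'a::zero) set" where
  "vecs N = {v. \<forall>i. N \<le> i \<longrightarrow> v i = 0}"

definition linear_code :: "nat \<Rightarrow> (nat \<Rightarrow> 'a::field) set \<Rightarrow> bool" where
  "linear_code N C \<longleftrightarrow> C \<subseteq> vecs N \<and> (\<lambda>i. 0) \<in> C
     \<and> (\<forall>u\<in>C. \<forall>v\<in>C. (\<lambda>i. u i + v i) \<in> C)
     \<and> (\<forall>a. \<forall>v\<in>C. (\<lambda>i. a * v i) \<in> C)"

definition wt :: "nat \<Rightarrow> (nat \<Rightarrow> 'a::zero) \<Rightarrow> nat" where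
  "wt N v = card {i. i < N \<and> v i \<noteq> 0}"

definition weight_enum :: "nat \<Rightarrow> (nat \<Rightarrow> 'a::zero) set \<Rightarrow> real \<Rightarrow> real \<Rightarrow> real" where
  "weight_enum N C x y = (\<Sum>c\<in>C. x ^ (N - wt N c) * y ^ (wt N c))"

definition formally_self_dual :: "nat \<Rightarrow> (nat \<Rightarrow> 'a::{finite,field}) set \<Rightarrow> bool" where
  "formally_self_dual N (C :: (nat \<Rightarrow> 'a) set) \<longleftrightarrow>
     (\<forall>x y. weight_enum N C x y =
        weight_enum N C ((x + (real (card (UNIV::'a set)) - 1) * y) / sqrt (real (card (UNIV::'a set))))
                        ((x - y) / sqrt (real (card (UNIV::'a set)))))"

definition divisible_code :: "nat \<Rightarrow> (nat \<Rightarrow> 'a::zero) set \<Rightarrow> bool" where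
  "divisible_code N C \<longleftrightarrow> (\<exists>\<Delta>::nat. \<Delta> > 1 \<and> (\<forall>c\<in>C. \<Delta> dvd wt N c))"

text \<open>D' is the image of C under v |-> D P v, D invertible diagonal, P permutation matrix.\<close>
definition monomially_equivalent ::
  "nat \<Rightarrow> (nat \<Rightarrow> 'a::field) set \<Rightarrow> (nat \<Rightarrow> 'a) set \<Rightarrow> bool" where
  "monomially_equivalent N C D \<longleftrightarrow>
     (\<exists>d \<sigma>. \<sigma> permutes {..<N} \<and> (\<forall>i<N. d i \<noteq> 0) \<and>
        D = (\<lambda>c. \<lambda>i. if i < N then d i * c (\<sigma> i) else 0) ` C)"

text \<open>Direct sum of n copies of <(1,1)>: the row space of the block-diagonal
  n x 2n generator matrix with blocks (1 1); codeword x G has i-th entry x_(i div 2).\<close>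
definition rep_sum_code :: "nat \<Rightarrow> (nat \<Rightarrow> 'a::field) set" where
  "rep_sum_code n = {(\<lambda>i. if i < 2 * n then a (i div 2) else 0) | a. True}"

end

theory Submission
  imports Defs "HOL-Computational_Algebra.Fundamental_Theorem_Algebra"
begin

text \<open>The complex weight enumerator \<open>W(x, y)\<close> of \<open>C\<close> is invariant under the MacWilliams
  transform and, if a prime \<open>l\<close> divides all weights, under \<open>y \<mapsto> z y\<close> for \<open>z\<^sup>l = 1\<close>. For a
  suitable primitive \<open>l\<close>-th root of unity \<open>z\<close> the composite linear map has two eigenvalues whose
  ratio is not a root of unity; this is a divisibility argument with Lucas sequences over the
  cyclotomic integers and is where \<open>q > 4\<close> enters. Iterating the map along a line through a root
  \<open>(1, t)\<close> then shows that \<open>t\<close> is one of the two eigen-slopes, so all roots of \<open>W(1, t)\<close> satisfy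
  one quadratic equation. For odd \<open>l\<close> the rotations \<open>t, \<zeta> t, \<zeta>\<^sup>2 t\<close> of a root would give three
  roots, so \<open>l = 2\<close>; then \<open>W(1, t) = (1 + (q - 1) t\<^sup>2)\<^sup>n\<close>, and \<open>C\<close> has exactly \<open>n (q - 1)\<close>
  codewords of weight 2. Two of them sharing a coordinate are proportional, so their supports
  split the \<open>2n\<close> coordinates into \<open>n\<close> pairs, and these codewords span \<open>C\<close>.\<close>

lemma finite_vecs: "finite (vecs N :: (nat \<Rightarrow> 'a::{finite,zero}) set)"
proof -
  have "vecs N \<subseteq> (\<lambda>xs i. if i < N then xs ! i else 0) ` {xs :: 'a list. set xs \<subseteq> UNIV \<and> length xs = N}"
  proof
    fix v :: "nat \<Rightarrow> 'a" assume "v \<in> vecs N"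
    hence "v = (\<lambda>i. if i < N then map v [0..<N] ! i else 0)"
      by (auto simp: vecs_def fun_eq_iff)
    thus "v \<in> (\<lambda>xs i. if i < N then xs ! i else 0) ` {xs. set xs \<subseteq> UNIV \<and> length xs = N}"
      by (intro image_eqI[of _ _ "map v [0..<N]"]) auto
  qed
  moreover have "finite {xs :: 'a list. set xs \<subseteq> UNIV \<and> length xs = N}"
    by (rule finite_lists_length_eq) simp
  ultimately show ?thesis by (rule finite_subset[OF _ finite_imageI])
qed

lemma wt_le: "wt N c \<le> N"
  unfolding wt_def using card_mono[of "{..<N}" "{i. i < N \<and> c i \<noteq> 0}"] by fastforce

lemma wt_eq_0_iff: "c \<in> vecs N \<Longrightarrow> wt N c = 0 \<longleftrightarrow> c = (\<lambda>i. 0)"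
  unfolding wt_def vecs_def by (auto simp: fun_eq_iff) (metis not_le)

lemma monomially_equivalent_refl:
  assumes "C \<subseteq> vecs N"
  shows "monomially_equivalent N C C"
proof -
  have "(\<lambda>c i. if i < N then 1 * c (id i) else 0) ` C = C"
  proof -
    have "(\<lambda>i. if i < N then c i else 0) = c" if "c \<in> C" for c
      using assms that by (auto simp: vecs_def fun_eq_iff)
    thus ?thesis by (simp cong: image_cong)
  qed
  thus ?thesis unfolding monomially_equivalent_def
    by (intro exI[of _ "\<lambda>i. 1"] exI[of _ id]) (simp add: permutes_id)
qed

lemma linear_code_length_0: "linear_code 0 C \<Longrightarrow> C = {\<lambda>i. 0}"
  unfolding linear_code_def vecs_def by (auto simp: fun_eq_iff)

subsection \<open>The order of a finite field is a power of its characteristic\<close>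

lemma prime_CHAR_finite_field: "prime CHAR('a::{finite,field})"
  using prime_CHAR_semidom[where ?'a='a] finite_imp_CHAR_pos[where ?'a='a] by simp

lemma of_nat_mod_CHAR: "(of_nat (m mod CHAR('a)) :: 'a::{finite,field}) = of_nat m"
proof -
  have "(of_nat m :: 'a) = of_nat (m mod CHAR('a) + CHAR('a) * (m div CHAR('a)))" by simp
  thus ?thesis by (simp only: of_nat_add of_nat_mult of_nat_CHAR) simp
qed

lemma card_field_ge_2: "card (UNIV :: 'a::{finite,field} set) \<ge> 2"
  using card_mono[of "UNIV :: 'a set" "{0, 1}"] by simp

definition add_closed :: "'a::monoid_add set \<Rightarrow> bool" where
  "add_closed S \<longleftrightarrow> 0 \<in> S \<and> (\<forall>x\<in>S. \<forall>y\<in>S. x + y \<in> S)"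

lemma add_closed_of_nat_mult: "add_closed S \<Longrightarrow> x \<in> S \<Longrightarrow> of_nat k * x \<in> S"
  by (induction k) (auto simp: add_closed_def distrib_right)

lemma add_closed_diff:
  assumes S: "add_closed S" and xy: "x \<in> S" "y \<in> (S :: 'a::{finite,field} set)"
  shows "x - y \<in> S"
proof -
  have "CHAR('a) > 0" using prime_CHAR_finite_field[where ?'a='a] prime_gt_0_nat by blast
  hence "(of_nat (CHAR('a) - 1) :: 'a) * y + y = 0"
    by (simp add: of_nat_diff distrib_right)
  hence "x - y = x + of_nat (CHAR('a) - 1) * y"
    by (simp add: eq_neg_iff_add_eq_0[symmetric])
  moreover have "x + of_nat (CHAR('a) - 1) * y \<in> S"
    using S xy add_closed_of_nat_mult[OF S xy(2)] unfolding add_closed_def by blast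
  ultimately show ?thesis by (simp only:)
qed

lemma add_closed_cancel_of_nat:
  assumes S: "add_closed S" and d: "0 < d" "d < CHAR('a)"
    and x: "of_nat d * x \<in> (S :: 'a::{finite,field} set)"
  shows "x \<in> S"
proof -
  have "coprime d CHAR('a)"
    using d prime_CHAR_finite_field[where ?'a='a]
    by (metis coprime_commute prime_imp_coprime nat_dvd_not_less)
  with bezout_nat[of d "CHAR('a)"] d obtain u v where "d * u = CHAR('a) * v + 1" by auto
  hence "(of_nat u :: 'a) * of_nat d = 1"
    by (metis of_nat_add of_nat_mult of_nat_1 of_nat_CHAR mult_zero_left add_0 mult.commute)
  with add_closed_of_nat_mult[OF S x, of u] show ?thesis by (simp add: mult.assoc[symmetric])
qed

lemma add_closed_translates_inj:
  fixes S :: "'a::{finite,field} set"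
  assumes S: "add_closed S" and x: "x \<notin> S"
  shows "inj_on (\<lambda>(s, i). s + of_nat i * x) (S \<times> {..<CHAR('a)})"
proof -
  have less: False
    if "s \<in> S" "s' \<in> S" "i' < i" "i < CHAR('a)" "s + of_nat i * x = s' + of_nat i' * x" for s s' i i'
  proof -
    from that have "of_nat (i - i') * x = s' - s"
      by (auto simp: of_nat_diff algebra_simps)
    with add_closed_diff[OF S that(2,1)] have "of_nat (i - i') * x \<in> S" by (simp only:)
    with add_closed_cancel_of_nat[OF S, of "i - i'" x] that x show False by linarith
  qed
  show ?thesis
  proof (rule inj_onI, clarify)
    fix s i s' i'
    assume *: "s \<in> S" "i < CHAR('a)" "s' \<in> S" "i' < CHAR('a)" "s + of_nat i * x = s' + of_nat i' * x"
    hence "i = i'" using less[of s s' i' i] less[of s' s i i'] by (cases i i' rule: linorder_cases) auto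
    with * show "s = s' \<and> i = i'" by simp
  qed
qed

lemma add_closed_extend:
  fixes S :: "'a::{finite,field} set"
  assumes S: "add_closed S" and x: "x \<notin> S"
  defines "S' \<equiv> (\<lambda>(s, i). s + of_nat i * x) ` (S \<times> {..<CHAR('a)})"
  shows "add_closed S'" "card S' = card S * CHAR('a)" "S \<subset> S'"
proof -
  define p where "p = CHAR('a)"
  have p1: "p > 1" unfolding p_def using prime_CHAR_finite_field prime_gt_1_nat by blast
  note add_closed_translates_inj[OF S x]
  thus "card S' = card S * CHAR('a)"
    unfolding S'_def p_def by (simp add: card_image card_cartesian_product)
  show "add_closed S'"
    unfolding add_closed_def
  proof (intro conjI ballI)
    show "0 \<in> S'" unfolding S'_def p_def[symmetric] using S p1
      by (intro image_eqI[of _ _ "(0, 0)"]) (auto simp: add_closed_def)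
  next
    fix u v assume "u \<in> S'" "v \<in> S'"
    then obtain s i s' i' where u: "u = s + of_nat i * x" "s \<in> S"
      and v: "v = s' + of_nat i' * x" "s' \<in> S"
      unfolding S'_def by auto
    have "u + v = (s + s') + of_nat ((i + i') mod p) * x"
      by (simp add: u v p_def of_nat_mod_CHAR algebra_simps)
    moreover have "s + s' \<in> S" using S u v unfolding add_closed_def by blast
    ultimately show "u + v \<in> S'" unfolding S'_def p_def[symmetric] using p1
      by (intro image_eqI[of _ _ "(s + s', (i + i') mod p)"]) auto
  qed
  have "S \<subseteq> S'"
  proof
    fix s assume "s \<in> S"
    thus "s \<in> S'" unfolding S'_def p_def[symmetric] using p1 by (intro image_eqI[of _ _ "(s, 0)"]) auto
  qed
  moreover have "x \<in> S'" unfolding S'_def p_def[symmetric] using S p1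
    by (intro image_eqI[of _ _ "(0, 1)"]) (auto simp: add_closed_def)
  ultimately show "S \<subset> S'" using x by blast
qed

lemma card_finite_field_prime_power: "\<exists>k. card (UNIV :: 'a::{finite,field} set) = CHAR('a) ^ k"
proof -
  have grow: "\<exists>k. card (UNIV :: 'a set) = CHAR('a) ^ k"
    if "add_closed S" "card S = CHAR('a) ^ j" "card (UNIV :: 'a set) - card S = m" for S :: "'a set" and j m
    using that
  proof (induction m arbitrary: S j rule: less_induct)
    case (less m S j)
    show ?case
    proof (cases "S = UNIV")
      case False
      then obtain x where x: "x \<notin> S" by blast
      define S' where "S' = (\<lambda>(s, i). s + of_nat i * x) ` (S \<times> {..<CHAR('a)})"
      note S' = add_closed_extend[OF less.prems(1) x, folded S'_def]
      have "card S < card S'" using S'(3) by (simp add: psubset_card_mono)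
      moreover have "card S' \<le> card (UNIV :: 'a set)" by (simp add: card_mono)
      ultimately have "card (UNIV :: 'a set) - card S' < m" using less.prems(3) by linarith
      thus ?thesis using less.IH[OF _ S'(1), of _ "Suc j"] less.prems(2) S'(2) by (simp add: mult.commute)
    qed (use less.prems in auto)
  qed
  have "add_closed {0 :: 'a}" by (simp add: add_closed_def)
  from grow[OF this _ refl, of 0] show ?thesis by simp
qed

subsection \<open>Roots of unity\<close>

definition zeta :: "nat \<Rightarrow> complex" where "zeta l = cis (2 * pi / real l)"

lemma zeta_power: "zeta l ^ m = cis (2 * pi * real m / real l)"
  unfolding zeta_def DeMoivre by (simp add: mult_ac)

lemma norm_zeta_power [simp]: "cmod (zeta l ^ j) = 1"
  by (simp add: zeta_def norm_power)

lemma zeta_power_eq_1_iff: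
  assumes l: "l > 0"
  shows "zeta l ^ m = 1 \<longleftrightarrow> l dvd m"
proof
  have zeta_l: "zeta l ^ l = 1" using l by (simp add: zeta_power)
  assume "zeta l ^ m = 1"
  moreover have "zeta l ^ m = zeta l ^ (l * (m div l) + m mod l)" by simp
  hence "zeta l ^ m = (zeta l ^ l) ^ (m div l) * zeta l ^ (m mod l)"
    by (simp only: power_add power_mult)
  ultimately have "cis (2 * pi * real (m mod l) / real l) = cis (2 * pi * real 0 / real l)"
    using zeta_l by (simp add: zeta_power)
  hence "m mod l = 0"
    by (rule inj_onD[OF bij_betw_imp_inj_on[OF bij_betw_roots_unity[OF l]]]) (use l in auto)
  thus "l dvd m" by (simp add: dvd_eq_mod_eq_0)
next
  assume "l dvd m"
  then obtain k where "m = l * k" by blast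
  thus "zeta l ^ m = 1" using l by (simp add: power_mult zeta_power)
qed

lemma primitive_zeta_power_eq_1_iff:
  assumes "prime l" "\<not> l dvd j"
  shows "(zeta l ^ j) ^ i = 1 \<longleftrightarrow> l dvd i"
  using assms zeta_power_eq_1_iff[of l "j * i"] prime_dvd_mult_iff[of l j i]
  by (simp add: power_mult prime_gt_0_nat)

lemma power_diff_eq_1_if_power_eq:
  fixes x :: "'a::field"
  assumes "x \<noteq> 0" "i \<le> j" "x ^ i = x ^ j"
  shows "x ^ (j - i) = 1"
proof -
  have "x ^ j = x ^ i * x ^ (j - i)" using assms(2) by (simp flip: power_add)
  thus ?thesis using assms(1,3) by simp
qed

lemma inj_power_if_not_root_of_unity:
  fixes x :: "'a::field"
  assumes "x \<noteq> 0" "\<And>k. k > 0 \<Longrightarrow> x ^ k \<noteq> 1"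
  shows "inj (\<lambda>k. x ^ k)"
proof -
  have le: "i = j" if "i \<le> j" "x ^ i = x ^ j" for i j
    using power_diff_eq_1_if_power_eq[OF assms(1) that] assms(2)[of "j - i"] that(1) by linarith
  show ?thesis by (rule injI) (metis le nat_le_linear)
qed

lemma primitive_zeta_power_inj:
  assumes l: "prime l" "\<not> l dvd j" and "a < l" "b < l" and eq: "(zeta l ^ j) ^ a = (zeta l ^ j) ^ b"
  shows "a = b"
proof -
  have "zeta l ^ j \<noteq> 0" by (simp add: zeta_def)
  note * = power_diff_eq_1_if_power_eq[OF this]
  have "l dvd b - a" if "a \<le> b" using *[OF that eq] primitive_zeta_power_eq_1_iff[OF l] by simp
  moreover have "l dvd a - b" if "b \<le> a" using *[OF that eq[symmetric]] primitive_zeta_power_eq_1_iff[OF l] by simp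
  ultimately show ?thesis using \<open>a < l\<close> \<open>b < l\<close>
    by (cases "a \<le> b") (auto dest!: dvd_imp_le)
qed

lemma sum_zeta_powers:
  assumes "l > 0"
  shows "(\<Sum>j<l. (zeta l ^ j) ^ i) = (if l dvd i then of_nat l else 0)"
proof -
  have "(\<Sum>j<l. (zeta l ^ j) ^ i) = (\<Sum>j<l. (zeta l ^ i) ^ j)"
    by (simp add: power_mult[symmetric] mult.commute)
  moreover have "(zeta l ^ i) ^ l = 1"
    using zeta_power_eq_1_iff[OF assms, of "i * l"] by (simp add: power_mult[symmetric])
  ultimately show ?thesis
    using zeta_power_eq_1_iff[OF assms, of i] by (cases "l dvd i") (simp_all add: geometric_sum)
qed

lemma sum_lessThan_split_0:
  fixes l :: nat
  assumes "l > 0"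
  shows "(\<Sum>j<l. f j) = f 0 + (\<Sum>j\<in>{1..<l}. f j)"
proof -
  have "(\<Sum>j<l. f j) = (\<Sum>j\<in>{0..<l}. f j)" by (simp add: lessThan_atLeast0)
  also have "\<dots> = f 0 + (\<Sum>j\<in>{Suc 0..<l}. f j)" by (rule sum.atLeast_Suc_lessThan[OF assms])
  finally show ?thesis by simp
qed

lemma sum_zeta_powers_nonzero:
  assumes "prime l"
  shows "(\<Sum>j\<in>{1..<l}. zeta l ^ j) = -1"
proof -
  have l: "l > 1" using assms prime_gt_1_nat by blast
  have "0 = (\<Sum>j<l. zeta l ^ j)" using sum_zeta_powers[of l 1] l by simp
  also have "\<dots> = 1 + (\<Sum>j\<in>{1..<l}. zeta l ^ j)" using sum_lessThan_split_0[of l "\<lambda>j. zeta l ^ j"] l by simp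
  finally show ?thesis by (simp add: eq_neg_iff_add_eq_0 add.commute)
qed

subsection \<open>Polynomials with integer coefficients\<close>

definition int_poly :: "complex poly \<Rightarrow> bool" where
  "int_poly P \<longleftrightarrow> (\<forall>i. coeff P i \<in> \<int>)"

lemma int_poly_0: "int_poly 0"
  and int_poly_1: "int_poly 1"
  and int_poly_add: "int_poly P \<Longrightarrow> int_poly Q \<Longrightarrow> int_poly (P + Q)"
  and int_poly_minus: "int_poly P \<Longrightarrow> int_poly (- P)"
  and int_poly_smult: "c \<in> \<int> \<Longrightarrow> int_poly P \<Longrightarrow> int_poly (smult c P)"
  and int_poly_pCons: "c \<in> \<int> \<Longrightarrow> int_poly P \<Longrightarrow> int_poly (pCons c P)"
  and int_poly_monom: "c \<in> \<int> \<Longrightarrow> int_poly (monom c k)"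
  by (auto simp: int_poly_def coeff_1 coeff_pCons split: nat.split)

lemma int_poly_mult: "int_poly P \<Longrightarrow> int_poly Q \<Longrightarrow> int_poly (P * Q)"
  unfolding int_poly_def coeff_mult by auto

lemma int_poly_pow: "int_poly P \<Longrightarrow> int_poly (P ^ k)"
  by (induction k) (simp_all add: int_poly_1 int_poly_mult)

lemma int_poly_sum: "(\<And>x. x \<in> A \<Longrightarrow> int_poly (f x)) \<Longrightarrow> int_poly (\<Sum>x\<in>A. f x)"
  unfolding int_poly_def coeff_sum by auto

lemma int_poly_prod: "(\<And>x. x \<in> A \<Longrightarrow> int_poly (f x)) \<Longrightarrow> int_poly (\<Prod>x\<in>A. f x)"
  by (induction A rule: infinite_finite_induct) (auto simp: int_poly_1 int_poly_mult)

lemmas int_poly_intros = int_poly_0 int_poly_1 int_poly_add int_poly_minus int_poly_smult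
  int_poly_pCons int_poly_monom int_poly_mult int_poly_pow int_poly_sum int_poly_prod

lemma poly_in_Ints: "int_poly P \<Longrightarrow> x \<in> \<int> \<Longrightarrow> poly P x \<in> \<int>"
  unfolding int_poly_def poly_altdef by auto

text \<open>Only the coefficients of exponents divisible by \<open>l\<close> survive the averaging over all \<open>l\<close>-th
  roots of unity.\<close>
lemma sum_poly_zeta_powers:
  assumes "l > 0" "int_poly P"
  shows "\<exists>s\<in>\<int>. (\<Sum>j<l. poly P (zeta l ^ j)) = of_nat l * s"
proof -
  have "(\<Sum>j<l. poly P (zeta l ^ j)) = (\<Sum>i\<le>degree P. coeff P i * (\<Sum>j<l. (zeta l ^ j) ^ i))"
    by (simp add: poly_altdef sum_distrib_left sum.swap[of _ "{..<l}"])
  also have "\<dots> = of_nat l * (\<Sum>i\<le>degree P. if l dvd i then coeff P i else 0)"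
    by (simp add: sum_zeta_powers[OF assms(1)] sum_distrib_left if_distrib mult_ac cong: if_cong)
  finally have "(\<Sum>j<l. poly P (zeta l ^ j)) = of_nat l * (\<Sum>i\<le>degree P. if l dvd i then coeff P i else 0)" .
  moreover have "(\<Sum>i\<le>degree P. if l dvd i then coeff P i else 0) \<in> \<int>"
    using assms(2) unfolding int_poly_def by (auto intro: Ints_sum)
  ultimately show ?thesis by blast
qed

lemma prod_one_minus_primitive_zeta_powers:
  assumes l: "prime l" and j: "\<not> l dvd j"
  defines "w \<equiv> zeta l ^ j"
  shows "(\<Prod>i\<in>{1..<l}. (1 - w ^ i)) = of_nat l"
proof -
  have l2: "l \<ge> 2" using l prime_ge_2_nat by blast
  define P where "P = (\<Sum>i<l. monom (1::complex) i)"
  define Q where "Q = (\<Prod>i\<in>{1..<l}. [:- (w ^ i), 1:])"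
  have "P = Q"
  proof (rule ccontr)
    assume ne: "P \<noteq> Q"
    have "degree Q = l - 1" "lead_coeff Q = 1"
      unfolding Q_def by (subst degree_prod_sum_eq; simp) (simp add: lead_coeff_prod)
    moreover have "coeff P k = (if k < l then 1 else 0)" for k
      unfolding P_def coeff_sum by (simp add: coeff_monom)
    ultimately have "coeff (P - Q) k = 0" if "k > l - 2" for k
      using that l2 coeff_eq_0[of Q k] by (cases "k = l - 1") auto
    hence deg: "degree (P - Q) \<le> l - 2" by (rule degree_le[rule_format])
    have "inj_on (\<lambda>i. w ^ i) {1..<l}"
      unfolding w_def by (rule inj_onI) (use primitive_zeta_power_inj[OF l j] in auto)
    hence "l - 1 = card ((\<lambda>i. w ^ i) ` {1..<l})" by (simp add: card_image)
    also have "\<dots> \<le> card {x. poly (P - Q) x = 0}"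
    proof (intro card_mono poly_roots_finite subsetI)
      fix x assume "x \<in> (\<lambda>i. w ^ i) ` {1..<l}"
      then obtain i where i: "1 \<le> i" "i < l" "x = w ^ i" by auto
      have "x ^ l = 1" "x \<noteq> 1"
        using i primitive_zeta_power_eq_1_iff[OF l j, of "i * l"] primitive_zeta_power_eq_1_iff[OF l j, of i]
        by (auto simp: w_def power_mult[symmetric] mult.assoc nat_dvd_not_less)
      hence "poly P x = 0" unfolding P_def by (simp add: poly_sum poly_monom geometric_sum)
      moreover have "poly Q x = 0" unfolding Q_def poly_prod using i by (auto intro!: prod_zero)
      ultimately show "x \<in> {x. poly (P - Q) x = 0}" by simp
    qed (use ne in simp)
    also have "\<dots> \<le> degree (P - Q)" using ne by (intro card_poly_roots_bound) simp
    finally show False using deg l2 by simp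
  qed
  hence "poly P 1 = poly Q 1" by simp
  thus ?thesis unfolding P_def Q_def by (simp add: poly_sum poly_monom poly_prod)
qed

definition geom_prod_poly :: "nat \<Rightarrow> complex poly" where
  "geom_prod_poly l = (\<Prod>i\<in>{1..<l}. (\<Sum>t<i. monom 1 t))"

lemma int_poly_geom_prod_poly: "int_poly (geom_prod_poly l)"
  unfolding geom_prod_poly_def by (intro int_poly_intros) simp

text \<open>So \<open>1 - w\<close> divides \<open>l\<close> in the ring of integers of the cyclotomic field, with an explicit
  integral cofactor.\<close>
lemma one_minus_zeta_power_pow_mult_geom_prod:
  assumes "prime l" "\<not> l dvd j"
  shows "(1 - zeta l ^ j) ^ (l - 1) * poly (geom_prod_poly l) (zeta l ^ j) = of_nat l"
proof -
  define w where "w = zeta l ^ j"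
  have "(1 - w) ^ (l - 1) * poly (geom_prod_poly l) w = (\<Prod>i\<in>{1..<l}. (1 - w) * (\<Sum>t<i. w ^ t))"
    unfolding geom_prod_poly_def poly_prod by (simp add: prod.distrib poly_sum poly_monom)
  also have "\<dots> = (\<Prod>i\<in>{1..<l}. (1 - w ^ i))"
    by (simp add: one_diff_power_eq)
  also have "\<dots> = of_nat l" unfolding w_def by (rule prod_one_minus_primitive_zeta_powers[OF assms])
  finally show ?thesis by (simp add: w_def)
qed

subsection \<open>A Lucas sequence of polynomials\<close>

fun lucas_poly :: "nat \<Rightarrow> nat \<Rightarrow> complex poly" where
  "lucas_poly q 0 = 0"
| "lucas_poly q (Suc 0) = 1"
| "lucas_poly q (Suc (Suc k)) = [:1, -1:] * lucas_poly q (Suc k) + [:0, of_nat q:] * lucas_poly q k"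

definition mu_plus :: "nat \<Rightarrow> complex \<Rightarrow> complex" where
  "mu_plus q z = ((1 - z) + csqrt ((1 - z) ^ 2 + 4 * of_nat q * z)) / 2"

definition mu_minus :: "nat \<Rightarrow> complex \<Rightarrow> complex" where
  "mu_minus q z = ((1 - z) - csqrt ((1 - z) ^ 2 + 4 * of_nat q * z)) / 2"

lemma mu_plus_eq: "mu_plus q z ^ 2 = (1 - z) * mu_plus q z + of_nat q * z"
  and mu_minus_eq: "mu_minus q z ^ 2 = (1 - z) * mu_minus q z + of_nat q * z"
proof -
  define d where "d = (1 - z) ^ 2 + 4 * of_nat q * z"
  have root: "((1 - z) + r) / 2 * (((1 - z) + r) / 2) = (1 - z) * (((1 - z) + r) / 2) + of_nat q * z"
    if "r * r = d" for r
  proof -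
    have "((1 - z) + r) / 2 * (((1 - z) + r) / 2) - ((1 - z) * (((1 - z) + r) / 2) + of_nat q * z)
          = (r * r - d) / 4"
      unfolding d_def by (simp add: field_simps power2_eq_square)
    thus ?thesis using that by simp
  qed
  have "csqrt d * csqrt d = d" by (simp flip: power2_eq_square)
  from root[OF this] root[of "- csqrt d"] this
  show "mu_plus q z ^ 2 = (1 - z) * mu_plus q z + of_nat q * z"
    "mu_minus q z ^ 2 = (1 - z) * mu_minus q z + of_nat q * z"
    unfolding mu_plus_def mu_minus_def d_def[symmetric] by (simp_all add: power2_eq_square)
qed

lemma mu_plus_neq_mu_minus:
  assumes z: "cmod z = 1" and q: "q > 1"
  shows "mu_plus q z \<noteq> mu_minus q z"
proof -
  have "z * cnj z = 1" using z complex_norm_square[of z] by (simp add: complex_mult_cnj[symmetric])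
  hence "(1 - z) ^ 2 + 4 * of_nat q * z = z * (cnj z + z - 2 + 4 * of_nat q)"
    by (simp add: power2_eq_square algebra_simps)
  moreover have "z \<noteq> 0" using z by auto
  moreover have "Re (cnj z + z - 2 + 4 * of_nat q) > 0"
    using abs_Re_le_cmod[of z] z q by simp
  hence "cnj z + z - 2 + 4 * of_nat q \<noteq> 0" by (metis less_irrefl zero_complex.sel(1))
  ultimately show ?thesis by (auto simp: mu_plus_def mu_minus_def)
qed

lemma lucas_poly_closed_form:
  assumes "m1 ^ 2 = (1 - z) * m1 + of_nat q * z" "m2 ^ 2 = (1 - z) * m2 + of_nat q * z"
  shows "poly (lucas_poly q k) z * (m1 - m2) = m1 ^ k - m2 ^ k"
proof (induction k rule: induct_nat_012)
  case (ge2 k)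
  have "poly (lucas_poly q (Suc (Suc k))) z * (m1 - m2) =
        (1 - z) * (poly (lucas_poly q (Suc k)) z * (m1 - m2)) + of_nat q * z * (poly (lucas_poly q k) z * (m1 - m2))"
    by (simp add: algebra_simps)
  also have "\<dots> = (1 - z) * (m1 ^ Suc k - m2 ^ Suc k) + of_nat q * z * (m1 ^ k - m2 ^ k)"
    by (simp only: ge2)
  also have "\<dots> = m1 ^ k * ((1 - z) * m1 + of_nat q * z) - m2 ^ k * ((1 - z) * m2 + of_nat q * z)"
    by (simp add: algebra_simps)
  also have "\<dots> = m1 ^ Suc (Suc k) - m2 ^ Suc (Suc k)"
    unfolding assms[symmetric] by (simp add: power2_eq_square mult_ac)
  finally show ?case .
qed simp_all

lemma int_poly_lucas_poly: "int_poly (lucas_poly q k)"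
  by (induction q k rule: lucas_poly.induct) (auto intro!: int_poly_intros)

lemma lucas_poly_mod_q:
  "\<exists>R. int_poly R \<and> (\<forall>z. poly (lucas_poly q (Suc k)) z = (1 - z) ^ k + of_nat q * poly R z)"
proof (induction k rule: induct_nat_012)
  case (ge2 k)
  then obtain R1 R2 where R1: "int_poly R1" "\<And>z. poly (lucas_poly q (Suc k)) z = (1 - z) ^ k + of_nat q * poly R1 z"
    and R2: "int_poly R2" "\<And>z. poly (lucas_poly q (Suc (Suc k))) z = (1 - z) ^ Suc k + of_nat q * poly R2 z"
    by blast
  define R where "R = [:1, -1:] * R2 + [:0, 1:] * [:1, -1:] ^ k + smult (of_nat q) ([:0, 1:] * R1)"
  have "poly (lucas_poly q (Suc (Suc (Suc k)))) z = (1 - z) ^ Suc (Suc k) + of_nat q * poly R z" for z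
  proof -
    have "poly (lucas_poly q (Suc (Suc (Suc k)))) z
        = (1 - z) * poly (lucas_poly q (Suc (Suc k))) z + of_nat q * z * poly (lucas_poly q (Suc k)) z"
      by (simp add: algebra_simps)
    also have "\<dots> = (1 - z) ^ Suc (Suc k) + of_nat q * poly R z"
      unfolding R1(2) R2(2) R_def by (simp add: algebra_simps)
    finally show ?thesis .
  qed
  moreover have "int_poly R" unfolding R_def using R1(1) R2(1) by (intro int_poly_intros) auto
  ultimately show ?case by blast
qed (auto intro: int_poly_0)

lemma lucas_poly_factor:
  assumes q: "\<And>z. z \<in> Z \<Longrightarrow> of_nat q * z = (1 - z) ^ 2 * poly Cp z"
    and Cp: "int_poly Cp" "poly Cp 1 = 0"
  shows "\<exists>W. int_poly W \<and> poly W 1 = 1 \<and> (\<forall>z\<in>Z. poly (lucas_poly q (Suc k)) z = (1 - z) ^ k * poly W z)"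
proof (induction k rule: induct_nat_012)
  case (ge2 k)
  then obtain W1 W2 where
    W1: "int_poly W1" "poly W1 1 = 1" "\<And>z. z \<in> Z \<Longrightarrow> poly (lucas_poly q (Suc k)) z = (1 - z) ^ k * poly W1 z" and
    W2: "int_poly W2" "poly W2 1 = 1"
      "\<And>z. z \<in> Z \<Longrightarrow> poly (lucas_poly q (Suc (Suc k))) z = (1 - z) ^ Suc k * poly W2 z"
    by blast
  define W where "W = W2 + Cp * W1"
  have "poly (lucas_poly q (Suc (Suc (Suc k)))) z = (1 - z) ^ Suc (Suc k) * poly W z" if z: "z \<in> Z" for z
  proof -
    have "poly (lucas_poly q (Suc (Suc (Suc k)))) z
        = (1 - z) * poly (lucas_poly q (Suc (Suc k))) z + (of_nat q * z) * poly (lucas_poly q (Suc k)) z"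
      by (simp add: algebra_simps)
    also have "\<dots> = (1 - z) ^ Suc (Suc k) * poly W z"
      unfolding W1(3)[OF z] W2(3)[OF z] q[OF z] W_def by (simp add: algebra_simps power2_eq_square)
    finally show ?thesis .
  qed
  moreover have "int_poly W" "poly W 1 = 1" unfolding W_def using W1 W2 Cp by (auto intro: int_poly_intros)
  ultimately show ?case by blast
qed (auto intro: int_poly_1)

lemma dvd_if_of_nat_eq_mult_Ints:
  assumes "(of_nat a :: complex) = of_nat b * w" "w \<in> \<int>"
  shows "b dvd a"
proof -
  from assms(2) obtain v where "w = of_int v" by (elim Ints_cases)
  with assms(1) have "int a = int b * v" by (metis of_int_eq_iff of_int_mult of_int_of_nat_eq)
  hence "int b dvd int a" by simp
  thus ?thesis by simp
qed

text \<open>Modulo \<open>q\<close>, \<open>lucas_poly q (k + 1)\<close> is \<open>(1 - z)\<^sup>k\<close>, and \<open>1 - \<zeta>\<close> divides \<open>l\<close>; summing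
  over the nontrivial \<open>l\<close>-th roots of unity would make \<open>q\<close> divide a power of \<open>l\<close>.\<close>
lemma lucas_poly_nonvanishing_coprime:
  assumes l: "prime l" and q: "\<not> l dvd q" "q > 1"
  shows "\<exists>j\<in>{1..<l}. poly (lucas_poly q (Suc k)) (zeta l ^ j) \<noteq> 0"
proof (rule ccontr)
  assume "\<not> ?thesis"
  hence U: "poly (lucas_poly q (Suc k)) (zeta l ^ j) = 0" if "j \<in> {1..<l}" for j
    using that by blast
  have l1: "l > 1" using l prime_gt_1_nat by blast
  obtain R where R: "int_poly R" "\<And>z. poly (lucas_poly q (Suc k)) z = (1 - z) ^ k + of_nat q * poly R z"
    using lucas_poly_mod_q by blast
  define G where "G = [:0, 1:] * R * [:1, -1:] ^ ((l - 2) * k) * geom_prod_poly l ^ k"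
  have G: "int_poly G" unfolding G_def
    by (intro int_poly_intros R(1) int_poly_geom_prod_poly) auto
  have key: "zeta l ^ j * of_nat l ^ k = - of_nat q * poly G (zeta l ^ j)" if j: "j \<in> {1..<l}" for j
  proof -
    define z where "z = zeta l ^ j"
    have "(1 - z) ^ k = - of_nat q * poly R z"
      using U[OF j] R(2)[of z] unfolding z_def by (simp add: eq_neg_iff_add_eq_0)
    moreover have "of_nat l = (1 - z) ^ (l - 1) * poly (geom_prod_poly l) z"
      unfolding z_def using j by (intro one_minus_zeta_power_pow_mult_geom_prod[symmetric] l)
        (auto dest: nat_dvd_not_less)
    moreover have "(l - 1) * k = k + (l - 2) * k" using l1 by (simp add: algebra_simps)
    ultimately have "of_nat l ^ k = - of_nat q * (poly R z * (1 - z) ^ ((l - 2) * k) * poly (geom_prod_poly l) z ^ k)"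
      by (simp add: power_mult_distrib power_mult[symmetric] power_add mult_ac)
    thus ?thesis unfolding z_def G_def by (simp add: mult_ac)
  qed
  obtain s where s: "s \<in> \<int>" "(\<Sum>j<l. poly G (zeta l ^ j)) = of_nat l * s"
    using sum_poly_zeta_powers[of l G] l1 G by auto
  have "- (of_nat l ^ k) = (\<Sum>j\<in>{1..<l}. zeta l ^ j * of_nat l ^ k)"
    using sum_zeta_powers_nonzero[OF l] by (simp add: sum_distrib_right[symmetric])
  also have "\<dots> = - of_nat q * (\<Sum>j\<in>{1..<l}. poly G (zeta l ^ j))"
    by (simp add: key sum_distrib_left)
  also have "(\<Sum>j\<in>{1..<l}. poly G (zeta l ^ j)) = of_nat l * s - poly G 1"
    using sum_lessThan_split_0[of l "\<lambda>j. poly G (zeta l ^ j)"] l1 s(2) by simp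
  finally have "of_nat (l ^ k) = (of_nat q :: complex) * (of_nat l * s - poly G 1)" by simp
  moreover have "of_nat l * s - poly G 1 \<in> \<int>" using s(1) poly_in_Ints[OF G] by simp
  ultimately have "q dvd l ^ k" by (rule dvd_if_of_nat_eq_mult_Ints)
  moreover have "coprime q (l ^ k)" using l q(1) by (simp add: prime_imp_coprime coprime_commute)
  ultimately show False using q(2) coprime_common_divisor_nat[of q "l ^ k" q] by simp
qed

text \<open>If \<open>q = l\<^sup>m\<close>, then \<open>q z = (1 - z)\<^sup>2 C(z)\<close> at the nontrivial \<open>l\<close>-th roots of unity; then
  the cofactor \<open>W\<close> of \<open>lucas_poly_factor\<close> would vanish there, and averaging \<open>W\<close> over all
  \<open>l\<close>-th roots of unity gives \<open>W 1 = 1 \<in> l \<int>\<close>.\<close>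
lemma lucas_poly_nonvanishing_prime_power:
  assumes l: "prime l" and q: "q = l ^ m" "m * (l - 1) \<ge> 3"
  shows "\<exists>j\<in>{1..<l}. poly (lucas_poly q (Suc k)) (zeta l ^ j) \<noteq> 0"
proof (rule ccontr)
  assume "\<not> ?thesis"
  hence U: "poly (lucas_poly q (Suc k)) (zeta l ^ j) = 0" if "j \<in> {1..<l}" for j
    using that by blast
  have l1: "l > 1" using l prime_gt_1_nat by blast
  have nd: "\<not> l dvd j" if "j \<in> {1..<l}" for j using that by (auto dest: nat_dvd_not_less)
  define Cp where "Cp = [:0, 1:] * [:1, -1:] ^ (m * (l - 1) - 2) * geom_prod_poly l ^ m"
  define Z where "Z = (\<lambda>j. zeta l ^ j) ` {1..<l}"
  have Cp: "int_poly Cp" "poly Cp 1 = 0" unfolding Cp_def using q(2)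
    by (auto intro!: int_poly_intros int_poly_geom_prod_poly)
  have qz: "of_nat q * z = (1 - z) ^ 2 * poly Cp z" if "z \<in> Z" for z
  proof -
    obtain j where j: "j \<in> {1..<l}" "z = zeta l ^ j" using \<open>z \<in> Z\<close> unfolding Z_def by blast
    have "of_nat q = ((1 - z) ^ (l - 1) * poly (geom_prod_poly l) z) ^ m"
      unfolding j(2) one_minus_zeta_power_pow_mult_geom_prod[OF l nd[OF j(1)]] q(1) by simp
    also have "\<dots> = (1 - z) ^ (m * (l - 1)) * poly (geom_prod_poly l) z ^ m"
      by (simp add: power_mult_distrib power_mult[symmetric] mult.commute)
    also have "m * (l - 1) = 2 + (m * (l - 1) - 2)" using q(2) by simp
    finally have "of_nat q = (1 - z) ^ 2 * ((1 - z) ^ (m * (l - 1) - 2) * poly (geom_prod_poly l) z ^ m)"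
      by (simp only: power_add mult.assoc)
    thus ?thesis unfolding Cp_def by (simp add: mult_ac)
  qed
  obtain W where W: "int_poly W" "poly W 1 = 1"
    "\<And>z. z \<in> Z \<Longrightarrow> poly (lucas_poly q (Suc k)) z = (1 - z) ^ k * poly W z"
    using lucas_poly_factor[OF qz Cp] by blast
  have "poly W (zeta l ^ j) = 0" if j: "j \<in> {1..<l}" for j
  proof -
    have "1 - zeta l ^ j \<noteq> 0"
      using primitive_zeta_power_eq_1_iff[OF l nd[OF j], of 1] l1 by auto
    thus ?thesis using W(3)[of "zeta l ^ j"] U[OF j] j unfolding Z_def by auto
  qed
  hence "(\<Sum>j<l. poly W (zeta l ^ j)) = 1"
    using sum_lessThan_split_0[of l "\<lambda>j. poly W (zeta l ^ j)"] l1 W(2) by simp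
  with sum_poly_zeta_powers[of l W] l1 W(1) obtain s where "(of_nat 1 :: complex) = of_nat l * s" "s \<in> \<int>" by auto
  hence "l dvd 1" by (rule dvd_if_of_nat_eq_mult_Ints)
  thus False using l1 by simp
qed

lemma exists_zeta_power_mu_ratio_not_root_of_unity:
  assumes l: "prime l" and q: "q > 1" and cases: "\<not> l dvd q \<or> (\<exists>m. q = l ^ m \<and> m * (l - 1) \<ge> 3)"
  shows "\<exists>j\<in>{1..<l}. \<forall>k>0. mu_plus q (zeta l ^ j) ^ k \<noteq> mu_minus q (zeta l ^ j) ^ k"
proof (rule ccontr)
  assume "\<not> ?thesis"
  then obtain kk where kk: "\<And>j. j \<in> {1..<l} \<Longrightarrow> kk j > 0 \<and> mu_plus q (zeta l ^ j) ^ kk j = mu_minus q (zeta l ^ j) ^ kk j"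
    by metis
  define K where "K = (\<Prod>j\<in>{1..<l}. kk j)"
  have "K > 0" unfolding K_def using kk by (intro prod_pos) auto
  then obtain k where K: "K = Suc k" using gr0_implies_Suc by blast
  have "poly (lucas_poly q (Suc k)) (zeta l ^ j) = 0" if j: "j \<in> {1..<l}" for j
  proof -
    obtain t where "K = kk j * t" unfolding K_def using j by (meson dvd_prodI finite_atLeastLessThan dvdE)
    hence "mu_plus q (zeta l ^ j) ^ K = mu_minus q (zeta l ^ j) ^ K"
      using kk[OF j] by (simp add: power_mult)
    thus ?thesis
      using lucas_poly_closed_form[OF mu_plus_eq[of q "zeta l ^ j"] mu_minus_eq[of q "zeta l ^ j"], of K]
        mu_plus_neq_mu_minus[OF norm_zeta_power q] K by simp
  qed
  thus False
    using cases lucas_poly_nonvanishing_coprime[OF l _ q] lucas_poly_nonvanishing_prime_power[OF l]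
    by blast
qed

lemma finite_field_card_dichotomy:
  assumes q: "card (UNIV :: 'a::{finite,field} set) > 4" and l: "prime l"
  shows "\<not> l dvd card (UNIV :: 'a set) \<or> (\<exists>m. card (UNIV :: 'a set) = l ^ m \<and> m * (l - 1) \<ge> 3)"
proof (cases "l dvd card (UNIV :: 'a set)")
  case True
  moreover obtain k where k: "card (UNIV :: 'a set) = CHAR('a) ^ k"
    using card_finite_field_prime_power by blast
  ultimately have "l dvd CHAR('a)" using l prime_dvd_power by metis
  hence qk: "card (UNIV :: 'a set) = l ^ k"
    using k l prime_CHAR_finite_field[where 'a='a] primes_dvd_imp_eq by metis
  have l2: "l \<ge> 2" using l prime_ge_2_nat by blast
  have "k > 0" using qk q by (cases k) auto
  have "k * (l - 1) \<ge> 3"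
  proof (cases "k \<ge> 2")
    case k2: True
    show ?thesis
    proof (cases "l = 2")
      case True
      hence "k \<noteq> 2" using qk q by auto
      thus ?thesis using k2 True by simp
    next
      case False
      hence "2 * 2 \<le> k * (l - 1)" using k2 l2 by (intro mult_le_mono) auto
      thus ?thesis by simp
    qed
  next
    case False
    hence "k = 1" using \<open>k > 0\<close> by simp
    thus ?thesis using qk q by simp
  qed
  with qk show ?thesis by blast
qed simp

subsection \<open>Pairings of an index set\<close>

lemma pairing_permutation:
  assumes fin: "finite S" and card: "card S = n" and pairs: "\<And>P. P \<in> S \<Longrightarrow> card P = 2"
    and disj: "\<And>P P'. P \<in> S \<Longrightarrow> P' \<in> S \<Longrightarrow> P \<noteq> P' \<Longrightarrow> P \<inter> P' = {}"
    and union: "\<Union>S = {..<2 * n}"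
  obtains \<sigma> f where "\<sigma> permutes {..<2 * n}" "bij_betw f {..<n} S" "\<And>i. i < 2 * n \<Longrightarrow> \<sigma> i \<in> f (i div 2)"
proof -
  obtain f where f: "bij_betw f {..<n} S"
    using ex_bij_betw_nat_finite[OF fin] card by (metis atLeast0LessThan)
  have fS: "f k \<in> S" if "k < n" for k using f that by (auto simp: bij_betw_def)
  have f_disj: "f k \<inter> f k' = {}" if "k < n" "k' < n" "k \<noteq> k'" for k k'
    using disj[OF fS fS] f that unfolding bij_betw_def inj_on_def by blast
  define A where "A k = Min (f k)" for k
  define B where "B k = Max (f k)" for k
  have AB: "f k = {A k, B k}" "A k \<noteq> B k" if k: "k < n" for k
  proof -
    obtain x y where "f k = {x, y}" "x \<noteq> y" using pairs[OF fS[OF k]] by (auto simp: card_2_iff)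
    thus "f k = {A k, B k}" "A k \<noteq> B k" by (auto simp: A_def B_def min_def max_def)
  qed
  define \<sigma> where "\<sigma> i = (if i < 2 * n then (if even i then A (i div 2) else B (i div 2)) else i)" for i
  have half: "i div 2 < n" if "i < 2 * n" for i using that by presburger
  have \<sigma>_in: "\<sigma> i \<in> f (i div 2)" if "i < 2 * n" for i
    using AB[of "i div 2"] that by (auto simp: \<sigma>_def)
  have "inj_on \<sigma> {..<2 * n}"
  proof (rule inj_onI)
    fix i i' assume i: "i \<in> {..<2 * n}" "i' \<in> {..<2 * n}" and eq: "\<sigma> i = \<sigma> i'"
    have "i div 2 = i' div 2"
    proof (rule ccontr)
      assume "i div 2 \<noteq> i' div 2"
      moreover have "\<sigma> i \<in> f (i div 2) \<inter> f (i' div 2)" using \<sigma>_in[of i] \<sigma>_in[of i'] i eq by simp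
      ultimately show False using f_disj[of "i div 2" "i' div 2"] half i by auto
    qed
    moreover have "A (i div 2) \<noteq> B (i div 2)" using AB(2) half i by simp
    hence "even i = even i'"
      using eq i \<open>i div 2 = i' div 2\<close> unfolding \<sigma>_def by (auto split: if_splits)
    ultimately show "i = i'" by presburger
  qed
  moreover have "\<sigma> i \<in> {..<2 * n}" if "i < 2 * n" for i
    using \<sigma>_in[OF that] fS[OF half[OF that]] union by blast
  hence "\<sigma> ` {..<2 * n} \<subseteq> {..<2 * n}" by auto
  ultimately have "\<sigma> ` {..<2 * n} = {..<2 * n}"
    by (intro card_subset_eq) (auto simp: card_image)
  hence "\<sigma> permutes {..<2 * n}"
    using \<open>inj_on \<sigma> {..<2 * n}\<close> by (intro bij_imp_permutes) (auto simp: bij_betw_def \<sigma>_def)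
  thus ?thesis using that f \<sigma>_in by blast
qed

lemma affine_coordinates:
  fixes t t1 t2 :: "'a::field"
  assumes "t1 \<noteq> t2"
  obtains a b where "a + b = 1" "a * t1 + b * t2 = t" "a = 0 \<longleftrightarrow> t = t2" "b = 0 \<longleftrightarrow> t = t1"
proof
  define a where "a = (t - t2) / (t1 - t2)"
  define b where "b = (t1 - t) / (t1 - t2)"
  have d: "t1 - t2 \<noteq> 0" using assms by simp
  have ha: "a * (t1 - t2) = t - t2" and hb: "b * (t1 - t2) = t1 - t"
    using d by (simp_all add: a_def b_def)
  have "(a + b) * (t1 - t2) = 1 * (t1 - t2)" unfolding distrib_right ha hb by simp
  thus ab: "a + b = 1" using d mult_right_cancel by blast
  hence "a * t1 + b * t2 = t2 + a * (t1 - t2)" by (simp add: algebra_simps flip: distrib_right)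
  thus "a * t1 + b * t2 = t" using ha by simp
  show "a = 0 \<longleftrightarrow> t = t2" "b = 0 \<longleftrightarrow> t = t1" using d by (auto simp: a_def b_def)
qed

subsection \<open>The complex weight enumerator of a formally self-dual code\<close>

lemma poly_eq_0_if_vanishes_on_reals:
  fixes P :: "complex poly"
  assumes "\<And>r. poly P (of_real r) = 0"
  shows "P = 0"
proof (rule ccontr)
  assume "P \<noteq> 0"
  hence "finite {x. poly P x = 0}" by (rule poly_roots_finite)
  moreover have "range (of_real :: real \<Rightarrow> complex) \<subseteq> {x. poly P x = 0}" using assms by auto
  ultimately have "finite (range (of_real :: real \<Rightarrow> complex))" using finite_subset by blast
  moreover have "inj (of_real :: real \<Rightarrow> complex)" by (simp add: inj_on_def)
  ultimately show False using finite_imageD infinite_UNIV_char_0[where 'a=real] by blast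
qed

locale fsd_code =
  fixes C :: "(nat \<Rightarrow> 'a::{finite,field}) set" and n q :: nat
  assumes linear: "linear_code (2 * n) C"
    and self_dual: "formally_self_dual (2 * n) C"
    and card_UNIV: "card (UNIV :: 'a set) = q"
begin

abbreviation "N \<equiv> 2 * n"

lemma weight_enum_macwilliams: "weight_enum N C x y = weight_enum N C ((x + (real q - 1) * y) / sqrt q) ((x - y) / sqrt q)"
  using self_dual unfolding formally_self_dual_def card_UNIV by blast

lemma C_subset_vecs: "C \<subseteq> vecs N"
  and zero_in_C: "(\<lambda>i. 0) \<in> C"
  and add_in_C: "u \<in> C \<Longrightarrow> v \<in> C \<Longrightarrow> (\<lambda>i. u i + v i) \<in> C"
  and smult_in_C: "v \<in> C \<Longrightarrow> (\<lambda>i. a * v i) \<in> C"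
  using linear unfolding linear_code_def by blast+

lemma finite_C: "finite C"
  using finite_subset[OF C_subset_vecs finite_vecs] .

lemma wt_eq_0_iff_in_C: "c \<in> C \<Longrightarrow> wt N c = 0 \<longleftrightarrow> c = (\<lambda>i. 0)"
  using wt_eq_0_iff[of c N] C_subset_vecs by auto

lemma sum_weight_zero_indicator:
  fixes f :: "nat \<Rightarrow> 'b::comm_ring_1"
  assumes "f 0 = 1" "\<And>k. k > 0 \<Longrightarrow> f k = 0"
  shows "(\<Sum>c\<in>C. f (wt N c)) = 1"
proof -
  have "(\<Sum>c\<in>C. f (wt N c)) = (\<Sum>c\<in>C. if c = (\<lambda>i. 0) then 1 else 0)"
  proof (rule sum.cong[OF refl])
    fix c assume "c \<in> C"
    thus "f (wt N c) = (if c = (\<lambda>i. 0) then 1 else 0)"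
      using wt_eq_0_iff_in_C[of c] assms by (cases "wt N c = 0") auto
  qed
  also have "\<dots> = 1" using finite_C zero_in_C by simp
  finally show ?thesis .
qed

text \<open>The MacWilliams identity at \<open>(x, y) = (1, 1)\<close>.\<close>
lemma card_C: "card C = q ^ n"
proof -
  have "(1 + (real q - 1) * 1) / sqrt q = sqrt q" by (simp add: real_div_sqrt)
  hence "weight_enum N C 1 1 = weight_enum N C (sqrt q) 0"
    using weight_enum_macwilliams by (metis diff_self div_0)
  also have "\<dots> = sqrt q ^ N * (\<Sum>c\<in>C. if wt N c = 0 then 1 else 0)"
    unfolding weight_enum_def sum_distrib_left by (rule sum.cong) auto
  also have "(\<Sum>c\<in>C. if wt N c = 0 then 1 else 0 :: real) = 1"
    by (rule sum_weight_zero_indicator) auto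
  also have "sqrt (real q) ^ N = real q ^ n" by (simp add: power_mult)
  finally have "real (card C) = real (q ^ n)" by (simp add: weight_enum_def)
  thus ?thesis by (simp only: of_nat_eq_iff)
qed

definition cwe :: "complex \<Rightarrow> complex \<Rightarrow> complex" where
  "cwe x y = (\<Sum>c\<in>C. x ^ (N - wt N c) * y ^ (wt N c))"

abbreviation "rq \<equiv> complex_of_real (sqrt (real q))"
abbreviation "q1 \<equiv> (of_nat q - 1 :: complex)"

lemma q1_neq_0: "q1 \<noteq> 0" and rq_neq_0: "rq \<noteq> 0"
  using card_field_ge_2[where 'a='a] card_UNIV by auto

lemma cwe_of_real: "cwe (of_real x) (of_real y) = of_real (weight_enum N C x y)"
  by (simp add: cwe_def weight_enum_def)

text \<open>The difference of the two sides is a polynomial in each variable separately, so the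
  identity extends from \<open>\<real>\<^sup>2\<close> to \<open>\<complex>\<^sup>2\<close> one variable at a time.\<close>
lemma cwe_macwilliams: "cwe ((x + q1 * y) / rq) ((x - y) / rq) = cwe x y"
proof -
  define D where "D x y = cwe x y - cwe ((x + q1 * y) / rq) ((x - y) / rq)" for x y
  define Px where "Px y = (\<Sum>c\<in>C. [:0, 1:] ^ (N - wt N c) * [:y:] ^ wt N c
       - [:q1 * y / rq, 1 / rq:] ^ (N - wt N c) * [:- y / rq, 1 / rq:] ^ wt N c)" for y
  define Py where "Py x = (\<Sum>c\<in>C. [:x:] ^ (N - wt N c) * [:0, 1:] ^ wt N c
       - [:x / rq, q1 / rq:] ^ (N - wt N c) * [:x / rq, - 1 / rq:] ^ wt N c)" for x
  have q1_div: "q1 * y / rq = y * (of_nat q / rq - 1 / rq)" for y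
    using rq_neq_0 by (simp add: field_simps)
  have poly_x: "D x y = poly (Px y) x" for x y
    unfolding D_def cwe_def Px_def poly_sum using q1_div
    by (simp add: sum_subtractf add_divide_distrib diff_divide_distrib add_ac)
  have poly_y: "D x y = poly (Py x) y" for x y
  proof -
    have "(x + q1 * y) / rq = x / rq + y * (q1 / rq)" "(x - y) / rq = x / rq + y * (- 1 / rq)"
      by (simp_all add: add_divide_distrib diff_divide_distrib q1_div)
    thus ?thesis unfolding D_def cwe_def Py_def poly_sum by (simp add: sum_subtractf)
  qed
  have real: "D (of_real x) (of_real y) = 0" for x y
  proof -
    have "cwe (of_real x) (of_real y)
        = of_real (weight_enum N C ((x + (real q - 1) * y) / sqrt q) ((x - y) / sqrt q))"
      using weight_enum_macwilliams unfolding cwe_of_real by metis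
    thus ?thesis unfolding D_def by (simp flip: cwe_of_real)
  qed
  have "Px (of_real y) = 0" for y
    by (rule poly_eq_0_if_vanishes_on_reals) (simp flip: poly_x add: real)
  hence "Py x = 0"
    by (intro poly_eq_0_if_vanishes_on_reals) (simp flip: poly_y add: poly_x)
  thus ?thesis using poly_y[of x y] unfolding D_def by simp
qed

lemma cwe_homogeneous: "cwe (k * x) (k * y) = k ^ N * cwe x y"
  unfolding cwe_def sum_distrib_left
proof (rule sum.cong[OF refl])
  fix c :: "nat \<Rightarrow> 'a"
  have "(k * x) ^ (N - wt N c) * (k * y) ^ wt N c
      = k ^ (N - wt N c + wt N c) * (x ^ (N - wt N c) * y ^ wt N c)"
    by (simp add: power_mult_distrib power_add mult_ac)
  thus "(k * x) ^ (N - wt N c) * (k * y) ^ wt N c = k ^ N * (x ^ (N - wt N c) * y ^ wt N c)"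
    using wt_le[of N c] by simp
qed

lemma cwe_x_0: "cwe x 0 = x ^ N"
proof -
  have "cwe 1 0 = 1" unfolding cwe_def by (rule sum_weight_zero_indicator) auto
  thus ?thesis using cwe_homogeneous[of x 1 0] by simp
qed

lemma cwe_1_1: "cwe 1 1 = of_nat (card C)"
  unfolding cwe_def by simp

lemma cwe_1_poly: "cwe 1 t = poly (\<Sum>c\<in>C. monom 1 (wt N c)) t"
  unfolding cwe_def by (simp add: poly_sum poly_monom)

end

subsection \<open>Formally self-dual divisible codes\<close>

locale divisible_fsd_code = fsd_code +
  fixes l :: nat
  assumes prime_l: "prime l"
    and l_dvd_wt: "\<And>c. c \<in> C \<Longrightarrow> l dvd wt N c"
    and card_gt_4: "q > 4"
    and n_pos: "n > 0"
begin

lemma cwe_rotate: "z ^ l = 1 \<Longrightarrow> cwe x (z * y) = cwe x y"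
  unfolding cwe_def
proof (rule sum.cong[OF refl])
  fix c assume z: "z ^ l = 1" and c: "c \<in> C"
  from l_dvd_wt[OF c] obtain m where m: "wt N c = l * m" by blast
  have "(z * y) ^ wt N c = (z ^ l) ^ m * y ^ wt N c" by (simp add: m power_mult_distrib power_mult)
  thus "x ^ (N - wt N c) * (z * y) ^ wt N c = x ^ (N - wt N c) * y ^ wt N c" using z by simp
qed

lemma cwe_twisted: "z ^ l = 1 \<Longrightarrow> cwe ((x + q1 * z * y) / rq) ((x - z * y) / rq) = cwe x y"
  using cwe_macwilliams[of x "z * y"] cwe_rotate[of z x y] by (simp add: mult.assoc)

definition eigen_slope :: "complex \<Rightarrow> complex \<Rightarrow> complex" where
  "eigen_slope z m = (m - 1) / (q1 * z)"

text \<open>If \<open>m\<^sup>2 = (1 - z) m + q z\<close>, then \<open>(1, eigen_slope z m)\<close> is an eigenvector of the twisted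
  transform in \<open>cwe_twisted\<close> with eigenvalue \<open>m / rq\<close>.\<close>
lemma twisted_eigenvector:
  assumes z: "z \<noteq> 0" and m: "m ^ 2 = (1 - z) * m + of_nat q * z"
  defines "t \<equiv> eigen_slope z m"
  shows "1 + q1 * z * t = m" "1 - z * t = m * t"
proof -
  have qz: "q1 * z \<noteq> 0" using z q1_neq_0 by simp
  hence t: "q1 * z * t = m - 1" by (simp add: t_def eigen_slope_def)
  thus "1 + q1 * z * t = m" by simp
  have "(1 - z * t) * (q1 * z) = q1 * z - z * (q1 * z * t)" by (simp add: algebra_simps)
  also have "\<dots> = m * (q1 * z * t)" unfolding t using m by (simp add: power2_eq_square algebra_simps)
  finally show "1 - z * t = m * t" using qz by (simp add: mult.commute mult.left_commute)
qed

lemma eigen_slope_quadratic: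
  assumes z: "z \<noteq> 0" and m: "m ^ 2 = (1 - z) * m + of_nat q * z"
  defines "t \<equiv> eigen_slope z m"
  shows "q1 * z * t ^ 2 + (1 + z) * t - 1 = 0"
proof -
  have qz: "q1 * z \<noteq> 0" using z q1_neq_0 by simp
  hence t: "q1 * z * t = m - 1" by (simp add: t_def eigen_slope_def)
  have "q1 * z * (q1 * z * t ^ 2 + (1 + z) * t - 1) = (q1 * z * t) ^ 2 + (1 + z) * (q1 * z * t) - q1 * z"
    by (simp add: power2_eq_square algebra_simps)
  also have "\<dots> = m ^ 2 - (1 - z) * m - of_nat q * z"
    unfolding t by (simp add: power2_eq_square algebra_simps)
  finally show ?thesis using m qz by simp
qed

lemma cwe_twisted_orbit:
  assumes z: "z ^ l = 1" "z \<noteq> 0"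
    and m1: "m1 ^ 2 = (1 - z) * m1 + of_nat q * z" and m2: "m2 ^ 2 = (1 - z) * m2 + of_nat q * z"
  defines "t1 \<equiv> eigen_slope z m1" and "t2 \<equiv> eigen_slope z m2"
  shows "cwe (A * m1 ^ k + B * m2 ^ k) (A * m1 ^ k * t1 + B * m2 ^ k * t2)
       = (rq ^ N) ^ k * cwe (A + B) (A * t1 + B * t2)"
proof (induction k arbitrary: A B)
  case (Suc k)
  note e1 = twisted_eigenvector[OF z(2) m1, folded t1_def]
  note e2 = twisted_eigenvector[OF z(2) m2, folded t2_def]
  have "A + B + q1 * z * (A * t1 + B * t2) = A * (1 + q1 * z * t1) + B * (1 + q1 * z * t2)"
    "A + B - z * (A * t1 + B * t2) = A * (1 - z * t1) + B * (1 - z * t2)"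
    by (simp_all add: algebra_simps)
  hence "cwe (A + B) (A * t1 + B * t2) = cwe ((A * m1 + B * m2) / rq) ((A * (m1 * t1) + B * (m2 * t2)) / rq)"
    using cwe_twisted[OF z(1), of "A + B" "A * t1 + B * t2"] by (simp add: e1 e2)
  also have "\<dots> = (1 / rq) ^ N * cwe (A * m1 + B * m2) (A * m1 * t1 + B * m2 * t2)"
    using cwe_homogeneous[of "1 / rq"] by (simp add: mult.assoc)
  finally have "cwe (A * m1 + B * m2) (A * m1 * t1 + B * m2 * t2) = rq ^ N * cwe (A + B) (A * t1 + B * t2)"
    using rq_neq_0 by (simp add: field_simps)
  with Suc[of "A * m1" "B * m2"] show ?case by (simp add: mult_ac)
qed simp

text \<open>A line in \<open>\<complex>\<^sup>2\<close> meeting the zero set of \<open>cwe\<close> in infinitely many points lies in it,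
  and it meets the axis \<open>y = 0\<close>, where \<open>cwe x 0 = x\<^sup>N\<close> only vanishes at the origin.\<close>
lemma cwe_vanishing_on_line:
  assumes inf: "infinite {x. cwe (a * x + b) (a * x * t1 + b * t2) = 0}" and "a \<noteq> 0" "t1 \<noteq> 0"
  shows "b * (t1 - t2) = 0"
proof -
  define P where "P = (\<Sum>c\<in>C. [:b, a:] ^ (N - wt N c) * [:b * t2, a * t1:] ^ wt N c)"
  have P: "poly P x = cwe (a * x + b) (a * x * t1 + b * t2)" for x
    unfolding P_def cwe_def poly_sum by (simp add: algebra_simps)
  have "P = 0" using poly_roots_finite[of P] inf unfolding P by auto
  define x0 where "x0 = - (b * t2) / (a * t1)"
  have "cwe (a * x0 + b) 0 = 0" using P[of x0] \<open>P = 0\<close> assms by (simp add: x0_def field_simps)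
  hence "a * x0 + b = 0" by (simp add: cwe_x_0)
  thus ?thesis using assms by (simp add: x0_def field_simps)
qed

lemma cwe_root_eq_eigen_slope:
  assumes z: "z ^ l = 1" and m12: "m1 \<noteq> m2"
    and m1: "m1 ^ 2 = (1 - z) * m1 + of_nat q * z" and m2: "m2 ^ 2 = (1 - z) * m2 + of_nat q * z"
    and not_root: "\<And>k. k > 0 \<Longrightarrow> m1 ^ k \<noteq> m2 ^ k"
    and t: "cwe 1 t = 0"
  shows "t = eigen_slope z m1 \<or> t = eigen_slope z m2"
proof (rule ccontr)
  assume nt: "\<not> ?thesis"
  define t1 where "t1 = eigen_slope z m1"
  define t2 where "t2 = eigen_slope z m2"
  have z0: "z \<noteq> 0" using z prime_l by (metis power_0_left zero_neq_one not_prime_0)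
  have qz: "q1 * z \<noteq> 0" "of_nat q * z \<noteq> 0" using z0 q1_neq_0 card_gt_4 by auto
  have "m1 \<noteq> 1" using m1 qz by (auto simp: algebra_simps)
  hence t1: "t1 \<noteq> 0" using qz by (simp add: t1_def eigen_slope_def)
  have m2_0: "m2 \<noteq> 0" using m2 qz by (auto simp: power2_eq_square)
  have t12: "t1 \<noteq> t2" using m12 qz by (simp add: t1_def t2_def eigen_slope_def divide_cancel_right)
  obtain a b where ab: "a + b = 1" "a * t1 + b * t2 = t" and "a = 0 \<longleftrightarrow> t = t2" "b = 0 \<longleftrightarrow> t = t1"
    by (rule affine_coordinates[OF t12])
  hence "a \<noteq> 0" "b \<noteq> 0" using nt by (simp_all add: t1_def t2_def)
  define \<rho> where "\<rho> = m1 / m2"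
  have zero: "cwe (a * \<rho> ^ k + b) (a * \<rho> ^ k * t1 + b * t2) = 0" for k
  proof -
    have "cwe (m2 ^ k * (a * \<rho> ^ k + b)) (m2 ^ k * (a * \<rho> ^ k * t1 + b * t2)) = 0"
      using cwe_twisted_orbit[OF z z0 m1 m2, of a k b] ab t m2_0
      by (simp add: \<rho>_def power_divide algebra_simps t1_def t2_def)
    thus ?thesis using m2_0 by (simp add: cwe_homogeneous)
  qed
  have "\<rho> \<noteq> 0" "\<And>k. k > 0 \<Longrightarrow> \<rho> ^ k \<noteq> 1"
    using not_root m2_0 \<open>m1 \<noteq> 1\<close> m1 qz by (auto simp: \<rho>_def power_divide power2_eq_square)
  hence "inj (\<lambda>k. \<rho> ^ k)" by (rule inj_power_if_not_root_of_unity)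
  hence "infinite (range (\<lambda>k. \<rho> ^ k))" by (rule range_inj_infinite)
  moreover have "range (\<lambda>k. \<rho> ^ k) \<subseteq> {x. cwe (a * x + b) (a * x * t1 + b * t2) = 0}"
    using zero by auto
  ultimately have "b * (t1 - t2) = 0"
    using cwe_vanishing_on_line \<open>a \<noteq> 0\<close> t1 finite_subset by blast
  thus False using \<open>b \<noteq> 0\<close> t12 by simp
qed

lemma cwe_roots_quadratic:
  obtains z where "z ^ l = 1" "z \<noteq> 0"
    "\<And>t. cwe 1 t = 0 \<Longrightarrow> q1 * z * t ^ 2 + (1 + z) * t - 1 = 0"
    "l = 2 \<Longrightarrow> z = -1"
proof -
  have "\<not> l dvd q \<or> (\<exists>m. q = l ^ m \<and> m * (l - 1) \<ge> 3)"
    using finite_field_card_dichotomy[where 'a='a, OF _ prime_l] card_gt_4 card_UNIV by simp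
  hence "\<exists>j\<in>{1..<l}. \<forall>k>0. mu_plus q (zeta l ^ j) ^ k \<noteq> mu_minus q (zeta l ^ j) ^ k"
    using exists_zeta_power_mu_ratio_not_root_of_unity[OF prime_l] card_gt_4 by simp
  then obtain j where j: "j \<in> {1..<l}" "\<And>k. k > 0 \<Longrightarrow> mu_plus q (zeta l ^ j) ^ k \<noteq> mu_minus q (zeta l ^ j) ^ k"
    by blast
  define z where "z = zeta l ^ j"
  have zl: "z ^ l = 1"
    using zeta_power_eq_1_iff[of l "j * l"] prime_l by (simp add: z_def prime_gt_0_nat power_mult[symmetric])
  have z0: "z \<noteq> 0" by (simp add: z_def zeta_def)
  have "cmod z = 1" by (simp add: z_def)
  hence "mu_plus q z \<noteq> mu_minus q z" using card_gt_4 by (intro mu_plus_neq_mu_minus) auto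
  hence "t = eigen_slope z (mu_plus q z) \<or> t = eigen_slope z (mu_minus q z)" if "cwe 1 t = 0" for t
    using cwe_root_eq_eigen_slope[OF zl _ mu_plus_eq mu_minus_eq _ that] j(2) by (simp add: z_def)
  hence "q1 * z * t ^ 2 + (1 + z) * t - 1 = 0" if "cwe 1 t = 0" for t
    using that eigen_slope_quadratic[OF z0 mu_plus_eq] eigen_slope_quadratic[OF z0 mu_minus_eq] by blast
  moreover have "z = -1" if "l = 2"
  proof -
    have "j = 1" using j(1) that by simp
    thus ?thesis using that by (simp add: z_def zeta_def complex_eq_iff)
  qed
  ultimately show ?thesis using that zl z0 by blast
qed

lemma card_C_gt_1: "card C > 1"
  using card_C one_less_power[of q n] card_gt_4 n_pos by simp

lemma cwe_1_has_root: "\<exists>t. cwe 1 t = 0"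
proof (rule ccontr)
  assume no_root: "\<not> ?thesis"
  define F where "F = (\<Sum>c\<in>C. monom (1::complex) (wt N c))"
  have "degree F = 0"
    using fundamental_theorem_of_algebra[of F] no_root
    by (auto simp: constant_degree cwe_1_poly F_def)
  then obtain c where "F = [:c:]" by (elim degree_eq_zeroE)
  hence "cwe 1 1 = cwe 1 0" by (simp add: cwe_1_poly F_def[symmetric])
  thus False using card_C_gt_1 by (simp add: cwe_1_1 cwe_x_0)
qed

text \<open>For odd \<open>l\<close>, a root \<open>t\<close> of \<open>cwe 1\<close> and its rotations \<open>\<zeta> t\<close>, \<open>\<zeta>\<^sup>2 t\<close> would be three
  distinct roots of the quadratic of \<open>cwe_roots_quadratic\<close>.\<close>
lemma divisor_eq_2: "l = 2"
proof (rule ccontr)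
  assume "l \<noteq> 2"
  hence l3: "l \<ge> 3" using prime_l prime_ge_2_nat[of l] by linarith
  obtain z where z: "z ^ l = 1" "z \<noteq> 0" and quad: "\<And>t. cwe 1 t = 0 \<Longrightarrow> q1 * z * t ^ 2 + (1 + z) * t - 1 = 0"
    using cwe_roots_quadratic by metis
  obtain t where t: "cwe 1 t = 0" using cwe_1_has_root by blast
  have t0: "t \<noteq> 0" using t cwe_x_0[of 1] by auto
  define w where "w = zeta l"
  have w: "w ^ k = 1 \<longleftrightarrow> l dvd k" for k unfolding w_def using l3 by (intro zeta_power_eq_1_iff) simp
  have w0: "w \<noteq> 0" by (simp add: w_def zeta_def)
  define Q where "Q = [:-1, 1 + z, q1 * z:]"
  have "degree Q = 2" "Q \<noteq> 0" using z(2) q1_neq_0 by (simp_all add: Q_def)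
  have Q_root: "poly Q s = 0" if "cwe 1 s = 0" for s
    using quad[OF that] by (simp add: Q_def algebra_simps power2_eq_square)
  have "(w ^ 2) ^ l = 1" using w[of "2 * l"] by (simp add: power_mult)
  hence "{t, w * t, w ^ 2 * t} \<subseteq> {s. poly Q s = 0}"
    using t cwe_rotate[of w 1 t] cwe_rotate[of "w ^ 2" 1 t] w[of l] Q_root by auto
  hence "card {t, w * t, w ^ 2 * t} \<le> card {s. poly Q s = 0}"
    by (rule card_mono[OF poly_roots_finite[OF \<open>Q \<noteq> 0\<close>]])
  also have "\<dots> \<le> 2" using card_poly_roots_bound[OF \<open>Q \<noteq> 0\<close>] \<open>degree Q = 2\<close> by simp
  finally have "card {t, w * t, w ^ 2 * t} \<le> 2" .
  moreover have "w \<noteq> 1" "w ^ 2 \<noteq> 1" "w \<noteq> w ^ 2" using w[of 1] w[of 2] l3 w0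
    by (auto dest: dvd_imp_le simp: power2_eq_square)
  hence "card {t, w * t, w ^ 2 * t} = 3" using t0 by auto
  ultimately show False by simp
qed

lemma even_wt: "c \<in> C \<Longrightarrow> even (wt N c)"
  using l_dvd_wt divisor_eq_2 by simp

definition half_enum :: "complex poly" where
  "half_enum = (\<Sum>c\<in>C. monom 1 (wt N c div 2))"

lemma poly_half_enum_square: "poly half_enum (t ^ 2) = cwe 1 t"
  unfolding half_enum_def cwe_def poly_sum poly_monom
  by (intro sum.cong refl) (auto elim!: evenE dest!: even_wt simp: power_mult)

text \<open>For \<open>l = 2\<close> the quadratic of \<open>cwe_roots_quadratic\<close> reads \<open>(q - 1) t\<^sup>2 = -1\<close>, so
  \<open>half_enum\<close> has the single root \<open>-1 / (q - 1)\<close>.\<close>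
lemma half_enum_eq: "half_enum = [:1, q1:] ^ n"
proof -
  obtain z where "z = -1" and quad: "\<And>t. cwe 1 t = 0 \<Longrightarrow> q1 * z * t ^ 2 + (1 + z) * t - 1 = 0"
    using cwe_roots_quadratic divisor_eq_2 by metis
  have "q1 * s = - 1" if "poly half_enum s = 0" for s
  proof -
    have "cwe 1 (csqrt s) = 0" using that poly_half_enum_square[of "csqrt s"] by simp
    from quad[OF this] \<open>z = -1\<close> show "q1 * s = -1"
      by (simp add: eq_neg_iff_add_eq_0 algebra_simps)
  qed
  hence root: "s = - 1 / q1" if "poly half_enum s = 0" for s
    using that q1_neq_0 by (simp add: field_simps)
  have at_0: "poly half_enum 0 = 1"
    using poly_half_enum_square[of 0] cwe_x_0[of 1] by simp
  obtain r where dec: "smult (lead_coeff half_enum) (\<Prod>i<degree half_enum. [:- r i, 1:]) = half_enum"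
    using complex_poly_decompose' by blast
  define d where "d = degree half_enum"
  define c where "c = lead_coeff half_enum"
  have "r i = - 1 / q1" if "i < d" for i
  proof (rule root)
    show "poly half_enum (r i) = 0"
      by (subst dec[symmetric]) (use that in \<open>auto simp: poly_prod d_def intro!: prod_zero\<close>)
  qed
  hence poly_eq: "poly half_enum s = c * (s + 1 / q1) ^ d" for s
    by (subst dec[symmetric]) (simp add: poly_prod c_def d_def add.commute)
  hence "c * (1 / q1) ^ d = 1" using at_0 by simp
  hence poly_eq': "poly half_enum s = (1 + q1 * s) ^ d" for s
    using poly_eq[of s] q1_neq_0 by (simp add: field_simps power_mult_distrib[symmetric])
  have "(of_nat q :: complex) ^ d = of_nat q ^ n"
    using poly_eq'[of 1] poly_half_enum_square[of 1] cwe_1_1 card_C by simp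
  hence "q ^ d = q ^ n" by (metis of_nat_eq_iff of_nat_power)
  hence "d = n" using card_gt_4 by (simp add: power_inject_exp)
  hence "poly half_enum = poly ([:1, q1:] ^ n)" using poly_eq' by (auto simp: mult.commute)
  thus ?thesis by (simp add: poly_eq_poly_eq_iff)
qed

lemma coeff_1_linear_power: "coeff ([:1, a:] ^ n) 1 = of_nat n * (a :: complex)"
  by (induction n) (auto simp: coeff_0_power mult_pCons_left coeff_pCons algebra_simps split: nat.split)

definition weight_two :: "(nat \<Rightarrow> 'a) set" where
  "weight_two = {c \<in> C. wt N c = 2}"

lemma card_weight_two: "card weight_two = n * (q - 1)"
proof -
  have "of_nat (card weight_two) = (\<Sum>c\<in>C. if wt N c = 2 then 1 else 0 :: complex)"
    using finite_C by (simp add: weight_two_def sum.If_cases Int_def conj_commute)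
  also have "\<dots> = coeff half_enum 1"
    unfolding half_enum_def coeff_sum coeff_monom
    by (intro sum.cong refl) (auto elim!: evenE dest!: even_wt)
  also have "\<dots> = of_nat (n * (q - 1))"
    unfolding half_enum_eq coeff_1_linear_power using card_gt_4 by (simp add: of_nat_diff)
  finally show ?thesis by (simp only: of_nat_eq_iff)
qed

definition support :: "(nat \<Rightarrow> 'a) \<Rightarrow> nat set" where
  "support c = {i. i < N \<and> c i \<noteq> 0}"

lemma wt_eq_card_support: "wt N c = card (support c)"
  by (simp add: wt_def support_def)

lemma support_subset: "support c \<subseteq> {..<N}"
  by (auto simp: support_def)

lemma support_smult: "m \<noteq> 0 \<Longrightarrow> support (\<lambda>k. m * c k) = support c"
  by (auto simp: support_def)

lemma C_outside_support: "c \<in> C \<Longrightarrow> i \<notin> support c \<Longrightarrow> c i = 0"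
  using C_subset_vecs unfolding vecs_def support_def by (cases "i < N") auto

lemma weight_two_support:
  assumes "c \<in> weight_two" "i \<in> support c"
  obtains j where "support c = {i, j}" "j \<noteq> i"
proof -
  obtain x y where "support c = {x, y}" "x \<noteq> y"
    using assms(1) by (auto simp: weight_two_def wt_eq_card_support card_2_iff)
  thus ?thesis using that assms(2) by (metis insert_commute insertE singletonD)
qed

lemma exists_nonzero_avoiding: "\<exists>m::'a. m \<noteq> 0 \<and> m \<noteq> x"
proof (rule ccontr)
  assume "\<not> ?thesis"
  hence "UNIV \<subseteq> {0, x}" by auto
  hence "q \<le> card {0, x}" using card_UNIV by (metis card_mono finite.emptyI finite.insertI)
  also have "\<dots> \<le> 2" by (rule card_insert_le_m1) auto
  finally show False using card_gt_4 by simp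
qed

lemma weight_two_same_support_proportional:
  assumes c: "c \<in> weight_two" "c' \<in> weight_two" and supp: "support c' = support c" "i \<in> support c"
  shows "\<exists>m. m \<noteq> 0 \<and> c' = (\<lambda>k. m * c k)"
proof -
  have cC: "c \<in> C" "c' \<in> C" using c by (auto simp: weight_two_def)
  obtain j where j: "support c = {i, j}" using c(1) supp(2) by (rule weight_two_support)
  have ci: "c i \<noteq> 0" "c' i \<noteq> 0" using supp by (auto simp: support_def)
  define m where "m = c' i / c i"
  define d where "d = (\<lambda>k. c' k + (- m) * c k)"
  have dC: "d \<in> C" unfolding d_def using add_in_C cC smult_in_C by blast
  have "d k = 0" if "k \<noteq> j" for k
    using ci C_outside_support[OF cC(1), of k] C_outside_support[OF cC(2), of k] supp j that
    by (cases "k = i") (auto simp: d_def m_def)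
  hence "support d \<subseteq> {j}" by (auto simp: support_def)
  hence "wt N d \<le> 1" unfolding wt_eq_card_support using card_mono[of "{j}" "support d"] by simp
  hence "wt N d = 0" using even_wt[OF dC] by (cases "wt N d") auto
  hence "c' = (\<lambda>k. m * c k)" using wt_eq_0_iff_in_C[OF dC] by (auto simp: d_def fun_eq_iff)
  moreover have "m \<noteq> 0" using ci by (simp add: m_def)
  ultimately show ?thesis by blast
qed

text \<open>Otherwise a suitable combination of \<open>c\<close> and \<open>c'\<close> would have weight \<open>3\<close>.\<close>
lemma weight_two_supports_meeting:
  assumes c: "c \<in> C" "c' \<in> C" and supp: "support c = {i, j}" "support c' = {i, j'}" "j \<noteq> i" "j' \<noteq> i"
  shows "j = j'"
proof (rule ccontr)
  assume jj': "j \<noteq> j'"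
  have nz: "c i \<noteq> 0" "c' i \<noteq> 0" "c j \<noteq> 0" "c' j' \<noteq> 0" "i < N" "j < N" "j' < N"
    using supp by (auto simp: support_def)
  have c0: "c k = 0" if "k \<noteq> i" "k \<noteq> j" for k using C_outside_support[OF c(1)] supp that by blast
  have c'0: "c' k = 0" if "k \<noteq> i" "k \<noteq> j'" for k using C_outside_support[OF c(2)] supp that by blast
  obtain m where m: "m \<noteq> 0" "m \<noteq> - c i / c' i" using exists_nonzero_avoiding by blast
  define e where "e = (\<lambda>k. c k + m * c' k)"
  have eC: "e \<in> C" unfolding e_def using add_in_C c smult_in_C by blast
  have "e i \<noteq> 0" using m nz by (auto simp: e_def field_simps add_eq_0_iff)
  moreover have "e j = c j" "e j' = m * c' j'"
    using c0[of j'] c'0[of j] jj' supp(3,4) by (simp_all add: e_def)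
  moreover have "e k = 0" if "k \<notin> {i, j, j'}" for k using c0[of k] c'0[of k] that by (simp add: e_def)
  ultimately have "support e = {i, j, j'}" using m(1) nz unfolding support_def by auto
  hence "wt N e = 3" using supp(3,4) jj' by (simp add: wt_eq_card_support)
  thus False using even_wt[OF eC] by simp
qed

lemma weight_two_proportional:
  assumes c: "c \<in> weight_two" "c' \<in> weight_two" and i: "i \<in> support c" "i \<in> support c'"
  shows "\<exists>m. m \<noteq> 0 \<and> c' = (\<lambda>k. m * c k)"
proof -
  obtain j where j: "support c = {i, j}" "j \<noteq> i" using c(1) i(1) by (rule weight_two_support)
  obtain j' where j': "support c' = {i, j'}" "j' \<noteq> i" using c(2) i(2) by (rule weight_two_support)
  have "j = j'" using c j j' by (intro weight_two_supports_meeting) (auto simp: weight_two_def)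
  thus ?thesis using weight_two_same_support_proportional[OF c _ i(1)] j j' by simp
qed

definition weight_two_supports :: "nat set set" where
  "weight_two_supports = support ` weight_two"

lemma finite_weight_two: "finite weight_two"
  using finite_C by (simp add: weight_two_def)

lemma finite_weight_two_supports: "finite weight_two_supports"
  using finite_weight_two by (simp add: weight_two_supports_def)

lemma card_weight_two_support: "P \<in> weight_two_supports \<Longrightarrow> card P = 2"
  by (auto simp: weight_two_supports_def weight_two_def wt_eq_card_support)

lemma weight_two_supports_disjoint:
  assumes "P \<in> weight_two_supports" "P' \<in> weight_two_supports" "P \<noteq> P'"
  shows "P \<inter> P' = {}"
proof (rule ccontr)
  assume "P \<inter> P' \<noteq> {}"
  then obtain i where "i \<in> P" "i \<in> P'" by blast
  moreover obtain c c' where "c \<in> weight_two" "P = support c" "c' \<in> weight_two" "P' = support c'"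
    using assms by (auto simp: weight_two_supports_def)
  ultimately have "P' = P" using weight_two_proportional support_smult by metis
  thus False using assms by simp
qed

lemma card_weight_two_fiber:
  assumes P: "P \<in> weight_two_supports"
  shows "card {c \<in> weight_two. support c = P} = q - 1"
proof -
  obtain c0 where c0: "c0 \<in> weight_two" "support c0 = P" using P by (auto simp: weight_two_supports_def)
  obtain i where i: "i \<in> P" using card_weight_two_support[OF P] by (metis card.empty ex_in_conv zero_neq_numeral)
  have c0i: "c0 i \<noteq> 0" using i c0 by (auto simp: support_def)
  have "{c \<in> weight_two. support c = P} = (\<lambda>m k. m * c0 k) ` (UNIV - {0})"
  proof (intro equalityI subsetI)
    fix c assume "c \<in> {c \<in> weight_two. support c = P}"
    thus "c \<in> (\<lambda>m k. m * c0 k) ` (UNIV - {0})"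
      using weight_two_proportional[OF c0(1), of c i] i c0 by auto
  next
    fix c assume "c \<in> (\<lambda>m k. m * c0 k) ` (UNIV - {0})"
    then obtain m where "m \<noteq> 0" "c = (\<lambda>k. m * c0 k)" by blast
    thus "c \<in> {c \<in> weight_two. support c = P}"
      using c0 smult_in_C support_smult by (auto simp: weight_two_def wt_eq_card_support)
  qed
  moreover have "inj_on (\<lambda>m k. m * c0 k) (UNIV - {0})"
    by (rule inj_onI) (use c0i in \<open>metis mult_cancel_right\<close>)
  ultimately show ?thesis using card_UNIV by (simp add: card_image card_Diff_singleton)
qed

lemma card_weight_two_supports: "card weight_two_supports = n"
proof -
  have eq: "weight_two = (\<Union>P\<in>weight_two_supports. {c \<in> weight_two. support c = P})"
    by (auto simp: weight_two_supports_def)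
  have "card weight_two = (\<Sum>P\<in>weight_two_supports. card {c \<in> weight_two. support c = P})"
    by (subst eq, rule card_UN_disjoint) (use finite_weight_two in \<open>auto simp: weight_two_supports_def\<close>)
  also have "\<dots> = card weight_two_supports * (q - 1)" by (simp add: card_weight_two_fiber)
  finally show ?thesis using card_weight_two card_gt_4 by simp
qed

lemma Union_weight_two_supports: "\<Union>weight_two_supports = {..<N}"
proof -
  have "card (\<Union>weight_two_supports) = sum card weight_two_supports"
    using weight_two_supports_disjoint finite_weight_two
    by (intro card_Union_disjoint) (auto simp: pairwise_def disjnt_def weight_two_supports_def
        intro: finite_subset[OF support_subset])
  also have "\<dots> = N" using card_weight_two_supports by (simp add: card_weight_two_support)
  finally show ?thesis using support_subset
    by (intro card_subset_eq) (auto simp: weight_two_supports_def)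
qed

context
  fixes f :: "nat \<Rightarrow> nat set" and e :: "nat \<Rightarrow> nat \<Rightarrow> 'a"
  assumes f: "bij_betw f {..<n} weight_two_supports"
    and e: "\<And>k. k < n \<Longrightarrow> e k \<in> weight_two \<and> support (e k) = f k"
begin

definition comb :: "(nat \<Rightarrow> 'a) \<Rightarrow> nat \<Rightarrow> 'a" where
  "comb x i = (\<Sum>k<n. x k * e k i)"

lemma e_in_C: "k < n \<Longrightarrow> e k \<in> C"
  using e by (simp add: weight_two_def)

lemma comb_in_C: "comb x \<in> C"
proof -
  have "(\<lambda>i. \<Sum>k<m. x k * e k i) \<in> C" if "m \<le> n" for m
    using that by (induction m) (auto simp: zero_in_C intro!: add_in_C smult_in_C e_in_C)
  thus ?thesis unfolding comb_def[abs_def] by simp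
qed

lemma comb_at:
  assumes k: "k < n" and i: "i \<in> f k"
  shows "comb x i = x k * e k i"
proof -
  have "e k' i = 0" if "k' < n" "k' \<noteq> k" for k'
  proof -
    have "f k' \<noteq> f k" using f that k unfolding bij_betw_def inj_on_def by blast
    hence "i \<notin> f k'"
      using weight_two_supports_disjoint[of "f k'" "f k"] f that k i by (auto simp: bij_betw_def)
    thus ?thesis using C_outside_support[OF e_in_C] e that by blast
  qed
  hence "comb x i = (\<Sum>k'<n. if k' = k then x k * e k i else 0)"
    unfolding comb_def by (intro sum.cong) auto
  thus ?thesis using k by simp
qed

lemma e_nonzero: "k < n \<Longrightarrow> i \<in> f k \<Longrightarrow> e k i \<noteq> 0"
  using e by (auto simp: support_def)

text \<open>The \<open>q\<^sup>n\<close> combinations are pairwise distinct codewords, and \<open>card C = q\<^sup>n\<close>.\<close>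
lemma C_eq_range_comb: "C = range comb"
proof -
  define PE where "PE = (\<Pi>\<^sub>E k\<in>{..<n}. (UNIV :: 'a set))"
  have "comb x \<in> comb ` PE" for x
  proof (rule image_eqI)
    show "comb x = comb (restrict x {..<n})" unfolding comb_def by (intro ext sum.cong) auto
    show "restrict x {..<n} \<in> PE" by (simp add: PE_def)
  qed
  hence "range comb = comb ` PE" by blast
  moreover have "inj_on comb PE"
  proof (rule inj_onI)
    fix x y assume x: "x \<in> PE" and y: "y \<in> PE" and eq: "comb x = comb y"
    show "x = y"
    proof (rule PiE_ext[OF x[unfolded PE_def] y[unfolded PE_def]])
      fix k assume "k \<in> {..<n}"
      hence k: "k < n" and "f k \<in> weight_two_supports" using bij_betwE[OF f] by auto
      hence "f k \<noteq> {}" using card_weight_two_support by force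
      then obtain i where i: "i \<in> f k" by blast
      have "x k * e k i = y k * e k i" using fun_cong[OF eq, of i] comb_at[OF k i] by simp
      thus "x k = y k" using e_nonzero[OF k i] by simp
    qed
  qed
  ultimately have "card (range comb) = q ^ n"
    by (simp add: card_image PE_def card_PiE card_UNIV)
  thus ?thesis using comb_in_C card_C finite_C by (intro card_subset_eq[symmetric]) auto
qed

end

theorem monomially_equivalent_rep_sum_code: "monomially_equivalent N C (rep_sum_code n)"
proof -
  obtain \<sigma> f where \<sigma>: "\<sigma> permutes {..<N}" and f: "bij_betw f {..<n} weight_two_supports"
    and \<sigma>_f: "\<And>i. i < N \<Longrightarrow> \<sigma> i \<in> f (i div 2)"
    using pairing_permutation[OF finite_weight_two_supports card_weight_two_supports
        card_weight_two_support weight_two_supports_disjoint Union_weight_two_supports] by blast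
  have "\<forall>k<n. \<exists>c. c \<in> weight_two \<and> support c = f k"
    using bij_betwE[OF f] unfolding weight_two_supports_def by (metis imageE lessThan_iff)
  then obtain e where e: "\<And>k. k < n \<Longrightarrow> e k \<in> weight_two \<and> support (e k) = f k" by metis
  define d where "d i = inverse (e (i div 2) (\<sigma> i))" for i
  have half: "i div 2 < n" if "i < N" for i using that by simp
  have d: "\<forall>i<N. d i \<noteq> 0" using e_nonzero[OF f e half \<sigma>_f] by (simp add: d_def)
  have normalize: "(\<lambda>i. if i < N then d i * comb e x (\<sigma> i) else 0) = (\<lambda>i. if i < N then x (i div 2) else 0)" for x
    using comb_at[OF f e half \<sigma>_f] e_nonzero[OF f e half \<sigma>_f] by (auto simp: d_def)
  have "(\<lambda>c i. if i < N then d i * c (\<sigma> i) else 0) ` C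
      = (\<lambda>c i. if i < N then d i * c (\<sigma> i) else 0) ` range (comb e)"
    using C_eq_range_comb[OF f e] by simp
  also have "\<dots> = rep_sum_code n"
    unfolding image_image normalize rep_sum_code_def by auto
  finally have "rep_sum_code n = (\<lambda>c i. if i < N then d i * c (\<sigma> i) else 0) ` C" ..
  thus ?thesis unfolding monomially_equivalent_def using \<sigma> d by blast
qed

end

theorem corollary3p7:
  fixes C :: "(nat \<Rightarrow> 'a::{finite,field}) set" and n :: nat
  assumes "card (UNIV :: 'a set) > 4"
    and "linear_code (2 * n) C"
    and "formally_self_dual (2 * n) C"
    and "divisible_code (2 * n) C"
  shows "monomially_equivalent (2 * n) C (rep_sum_code n)"
proof (cases "n = 0")
  case True
  hence "C = rep_sum_code n" using linear_code_length_0 assms(2) by (simp add: rep_sum_code_def)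
  moreover have "C \<subseteq> vecs (2 * n)" using assms(2) by (simp add: linear_code_def)
  ultimately show ?thesis using monomially_equivalent_refl by simp
next
  case False
  obtain \<Delta> where "\<Delta> > 1" "\<And>c. c \<in> C \<Longrightarrow> \<Delta> dvd wt (2 * n) c"
    using assms(4) unfolding divisible_code_def by blast
  moreover obtain l where "prime l" "l dvd \<Delta>" using prime_factor_nat[of \<Delta>] \<open>\<Delta> > 1\<close> by auto
  ultimately interpret divisible_fsd_code C n "card (UNIV :: 'a set)" l
    using assms False by unfold_locales (auto intro: dvd_trans)
  show ?thesis by (rule monomially_equivalent_rep_sum_code)
qed

end
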